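(* For any $m\in\mathbb{N}$ and $\alpha\in\mathbb{N}^n$ with $2\le|\alpha|\le m$, $$\sum_{(\alpha^1,\dots,\alpha^{m-1})\in\mathbb{N}(\alpha,m)}\frac{\alpha!}{\alpha^1!\cdots\alpha^{m-1}!}=\frac{(m-1)!}{(m-|\alpha|)!\,(|\alpha|-1)!}.$$
   Context: For $\alpha\in\mathbb{N}^n$, $|\alpha|=\sum_j\alpha_j$ and $\alpha!=\alpha_1!\cdots\alpha_n!$. $\mathbb{N}(\alpha,m)$ is the set of all $(\alpha^1,\dots,\alpha^{m-1})\in(\mathbb{N}^n)^{m-1}$ with $\alpha^1+\dots+\alpha^{m-1}=\alpha$ and $1\cdot|\alpha^1|+2\cdot|\alpha^2|+\dots+(m-1)\cdot|\alpha^{m-1}|=m$. *)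

theory Defs
  imports Complex_Main "HOL-Library.FuncSet"
begin

text \<open>Multi-indices in \<open>\<nat>^n\<close> are functions \<open>'n \<Rightarrow> nat\<close> for a finite index type \<open>'n\<close>
  (with \<open>CARD('n) = n\<close>).\<close>

definition mi_abs :: "('n::finite \<Rightarrow> nat) \<Rightarrow> nat" where
  "mi_abs \<beta> = (\<Sum>i\<in>UNIV. \<beta> i)"

definition mi_fact :: "('n::finite \<Rightarrow> nat) \<Rightarrow> nat" where
  "mi_fact \<beta> = (\<Prod>i\<in>UNIV. fact (\<beta> i))"

text \<open>\<open>\<nat>(\<alpha>,m)\<close>: tuples \<open>(\<alpha>^1,\<dots>,\<alpha>^{m-1})\<close>, represented as extensional functions
  on \<open>{1..<m}\<close>.\<close>

definition Nset :: "('n::finite \<Rightarrow> nat) \<Rightarrow> nat \<Rightarrow> (nat \<Rightarrow> ('n \<Rightarrow> nat)) set" where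
  "Nset \<alpha> m = {A \<in> {1..<m} \<rightarrow>\<^sub>E UNIV.
      (\<lambda>i. \<Sum>k\<in>{1..<m}. A k i) = \<alpha> \<and>
      (\<Sum>k\<in>{1..<m}. k * mi_abs (A k)) = m}"

end

theory Submission
  imports Defs "HOL-Computational_Algebra.Polynomial"
begin

text \<open>Give the tuple \<open>(\<alpha>^1,\<dots>,\<alpha>^{m-1})\<close> the weight
  \<open>x^(|\<alpha>^1| + 2|\<alpha>^2| + \<dots> + (m-1)|\<alpha>^{m-1}|)\<close>. Over all decompositions
  \<open>\<alpha> = \<alpha>^1 + \<dots> + \<alpha>^{m-1}\<close>, the multinomial theorem for multi-indices sums the weighted
  coefficients \<open>\<alpha>!/(\<alpha>^1!\<cdots>\<alpha>^{m-1}!)\<close> to \<open>(x + x^2 + \<dots> + x^{m-1})^|\<alpha>|\<close>. The sum in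
  question is the coefficient of \<open>x^m\<close> of this polynomial, i.e. the number
  \<open>(m-1 choose |\<alpha>|-1)\<close> of compositions of \<open>m\<close> into \<open>|\<alpha>|\<close> positive parts; \<open>|\<alpha>| \<ge> 2\<close>
  ensures that no part can exceed \<open>m - 1\<close>.\<close>

definition mi_splits :: "nat set \<Rightarrow> ('n::finite \<Rightarrow> nat) \<Rightarrow> (nat \<Rightarrow> 'n \<Rightarrow> nat) set" where
  "mi_splits K \<alpha> = {A \<in> K \<rightarrow>\<^sub>E UNIV. (\<lambda>i. \<Sum>k\<in>K. A k i) = \<alpha>}"

lemma finite_mi_splits:
  fixes \<alpha> :: "'n::finite \<Rightarrow> nat"
  assumes "finite K"
  shows "finite (mi_splits K \<alpha>)"
proof (rule finite_subset)
  show "mi_splits K \<alpha> \<subseteq> K \<rightarrow>\<^sub>E (UNIV \<rightarrow>\<^sub>E {..Max (range \<alpha>)})"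
  proof
    fix A assume A: "A \<in> mi_splits K \<alpha>"
    have "A k i \<le> Max (range \<alpha>)" if "k \<in> K" for k i
    proof -
      have "A k i \<le> (\<Sum>k\<in>K. A k i)" using assms that by (intro member_le_sum) auto
      also have "\<dots> = \<alpha> i" using A unfolding mi_splits_def by (auto dest: fun_cong[where x=i])
      also have "\<dots> \<le> Max (range \<alpha>)" by simp
      finally show ?thesis .
    qed
    then show "A \<in> K \<rightarrow>\<^sub>E (UNIV \<rightarrow>\<^sub>E {..Max (range \<alpha>)})"
      using A unfolding mi_splits_def by (auto simp: PiE_iff)
  qed
  show "finite (K \<rightarrow>\<^sub>E ((UNIV :: 'n set) \<rightarrow>\<^sub>E {..Max (range \<alpha>)}))"
    using assms by (intro finite_PiE) auto
qed

lemma mi_splits_empty: "mi_splits {} \<alpha> = (if \<alpha> = (\<lambda>_. 0) then {\<lambda>_. undefined} else {})"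
  unfolding mi_splits_def by auto

lemma mi_splits_insert:
  assumes "finite K" and "k \<notin> K"
  shows "bij_betw (\<lambda>(\<beta>, B). B(k := \<beta>))
           (SIGMA \<beta>:PiE UNIV (\<lambda>i. {..\<alpha> i}). mi_splits K (\<lambda>i. \<alpha> i - \<beta> i))
           (mi_splits (insert k K) \<alpha>)"
proof (rule bij_betw_byWitness[where f' = "\<lambda>A. (A k, A(k := undefined))"])
  have sum_upd: "(\<Sum>k'\<in>K. (if k' = k then x else A k') i) = (\<Sum>k'\<in>K. A k' i)" for A x i
    using assms by (intro sum.cong) auto
  show "\<forall>p \<in> (SIGMA \<beta>:PiE UNIV (\<lambda>i. {..\<alpha> i}). mi_splits K (\<lambda>i. \<alpha> i - \<beta> i)).
          (\<lambda>A. (A k, A(k := undefined))) ((\<lambda>(\<beta>, B). B(k := \<beta>)) p) = p"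
    using assms by (auto simp: mi_splits_def PiE_iff extensional_def fun_eq_iff)
  show "\<forall>A \<in> mi_splits (insert k K) \<alpha>. (\<lambda>(\<beta>, B). B(k := \<beta>)) (A k, A(k := undefined)) = A"
    by auto
  show "(\<lambda>(\<beta>, B). B(k := \<beta>)) ` (SIGMA \<beta>:PiE UNIV (\<lambda>i. {..\<alpha> i}). mi_splits K (\<lambda>i. \<alpha> i - \<beta> i))
          \<subseteq> mi_splits (insert k K) \<alpha>"
    using assms by (auto simp: mi_splits_def PiE_iff extensional_def fun_eq_iff sum_upd)
  show "(\<lambda>A. (A k, A(k := undefined))) ` mi_splits (insert k K) \<alpha>
          \<subseteq> (SIGMA \<beta>:PiE UNIV (\<lambda>i. {..\<alpha> i}). mi_splits K (\<lambda>i. \<alpha> i - \<beta> i))"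
    using assms
    by (auto simp: mi_splits_def PiE_iff extensional_def fun_eq_iff sum_upd) (metis le_add1, metis add_diff_cancel_left')
qed

lemma mi_fact_pos: "mi_fact \<beta> > 0"
  unfolding mi_fact_def by (simp add: prod_pos)

lemma mi_binomial:
  fixes \<alpha> :: "'n::finite \<Rightarrow> nat" and a b :: "'a::field_char_0"
  shows "(\<Sum>\<beta>\<in>PiE UNIV (\<lambda>i. {..\<alpha> i}).
            of_nat (mi_fact \<alpha>) / (of_nat (mi_fact \<beta>) * of_nat (mi_fact (\<lambda>i. \<alpha> i - \<beta> i)))
            * a ^ mi_abs \<beta> * b ^ mi_abs (\<lambda>i. \<alpha> i - \<beta> i))
         = (a + b) ^ mi_abs \<alpha>"
proof -
  define f where "f i j = fact (\<alpha> i) / (fact j * fact (\<alpha> i - j)) * a ^ j * b ^ (\<alpha> i - j)" for i j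
  have "(a + b) ^ mi_abs \<alpha> = (\<Prod>i\<in>UNIV. (a + b) ^ \<alpha> i)"
    unfolding mi_abs_def by (simp add: power_sum)
  also have "\<dots> = (\<Prod>i\<in>UNIV. \<Sum>j\<le>\<alpha> i. f i j)"
    by (intro prod.cong refl) (auto simp: binomial_ring f_def binomial_fact intro!: sum.cong)
  also have "\<dots> = (\<Sum>\<beta>\<in>PiE UNIV (\<lambda>i. {..\<alpha> i}). \<Prod>i\<in>UNIV. f i (\<beta> i))"
    by (rule prod_sum_PiE) auto
  also have "\<dots> = (\<Sum>\<beta>\<in>PiE UNIV (\<lambda>i. {..\<alpha> i}).
            of_nat (mi_fact \<alpha>) / (of_nat (mi_fact \<beta>) * of_nat (mi_fact (\<lambda>i. \<alpha> i - \<beta> i)))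
            * a ^ mi_abs \<beta> * b ^ mi_abs (\<lambda>i. \<alpha> i - \<beta> i))"
    unfolding f_def mi_fact_def mi_abs_def
    by (intro sum.cong refl) (simp add: prod.distrib prod_dividef power_sum of_nat_prod)
  finally show ?thesis ..
qed

lemma mi_multinomial:
  fixes \<alpha> :: "'n::finite \<Rightarrow> nat" and y :: "nat \<Rightarrow> 'a::field_char_0"
  assumes "finite K"
  shows "(\<Sum>A\<in>mi_splits K \<alpha>. of_nat (mi_fact \<alpha>) / (\<Prod>k\<in>K. of_nat (mi_fact (A k)))
            * (\<Prod>k\<in>K. y k ^ mi_abs (A k)))
         = (\<Sum>k\<in>K. y k) ^ mi_abs \<alpha>"
  using assms
proof (induction K arbitrary: \<alpha> rule: finite_induct)
  case empty
  show ?case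
    by (auto simp: mi_splits_empty mi_fact_def mi_abs_def)
next
  case (insert k K)
  define D where "D \<beta> = (\<lambda>i. \<alpha> i - \<beta> i)" for \<beta> :: "'n \<Rightarrow> nat"
  define c where "c \<beta> = of_nat (mi_fact \<alpha>) / (of_nat (mi_fact \<beta>) * of_nat (mi_fact (D \<beta>))) * y k ^ mi_abs \<beta>"
    for \<beta> :: "'n \<Rightarrow> nat"
  define g where "g A = of_nat (mi_fact \<alpha>) / (\<Prod>k\<in>insert k K. of_nat (mi_fact (A k)))
    * (\<Prod>k\<in>insert k K. y k ^ mi_abs (A k))" for A :: "nat \<Rightarrow> 'n \<Rightarrow> nat"
  have g_upd: "g (B(k := \<beta>)) = c \<beta> * (of_nat (mi_fact (D \<beta>)) / (\<Prod>k\<in>K. of_nat (mi_fact (B k)))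
      * (\<Prod>k\<in>K. y k ^ mi_abs (B k)))" for \<beta> B
  proof -
    have "(\<Prod>k'\<in>K. of_nat (mi_fact ((B(k := \<beta>)) k')) :: 'a) = (\<Prod>k'\<in>K. of_nat (mi_fact (B k')))"
      "(\<Prod>k'\<in>K. y k' ^ mi_abs ((B(k := \<beta>)) k')) = (\<Prod>k'\<in>K. y k' ^ mi_abs (B k'))"
      using insert.hyps by (auto intro: prod.cong)
    moreover have "(of_nat (mi_fact (D \<beta>)) :: 'a) \<noteq> 0"
      using mi_fact_pos[of "D \<beta>"] by simp
    ultimately show ?thesis
      unfolding g_def c_def using insert.hyps by (simp add: field_simps)
  qed
  have "(\<Sum>A\<in>mi_splits (insert k K) \<alpha>. g A)
      = (\<Sum>(\<beta>, B)\<in>(SIGMA \<beta>:PiE UNIV (\<lambda>i. {..\<alpha> i}). mi_splits K (D \<beta>)). g (B(k := \<beta>)))"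
    using sum.reindex_bij_betw[OF mi_splits_insert[OF insert.hyps], of g \<alpha>]
    by (simp add: D_def case_prod_unfold)
  also have "\<dots> = (\<Sum>\<beta>\<in>PiE UNIV (\<lambda>i. {..\<alpha> i}). \<Sum>B\<in>mi_splits K (D \<beta>). g (B(k := \<beta>)))"
    using insert.hyps by (intro sum.Sigma[symmetric]) (auto intro: finite_PiE finite_mi_splits)
  also have "\<dots> = (\<Sum>\<beta>\<in>PiE UNIV (\<lambda>i. {..\<alpha> i}). c \<beta> * (\<Sum>k\<in>K. y k) ^ mi_abs (D \<beta>))"
    unfolding g_upd sum_distrib_left[symmetric] insert.IH ..
  also have "\<dots> = (y k + (\<Sum>k\<in>K. y k)) ^ mi_abs \<alpha>"
    unfolding c_def D_def using mi_binomial[of \<alpha> "y k" "\<Sum>k\<in>K. y k"] by (simp add: mult_ac)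
  finally show ?case
    using insert.hyps unfolding g_def by simp
qed

lemma coeff_poly_eq_sum_powers:
  fixes c :: "'b \<Rightarrow> 'a::{comm_ring_1,ring_no_zero_divisors,ring_char_0}"
  assumes "finite T" and "\<And>x. (\<Sum>A\<in>T. c A * x ^ w A) = poly p x"
  shows "coeff p n = (\<Sum>A\<in>{A\<in>T. w A = n}. c A)"
proof -
  have "poly (\<Sum>A\<in>T. monom (c A) (w A)) = poly p"
    using assms(2) by (simp add: fun_eq_iff poly_sum poly_monom)
  then have "p = (\<Sum>A\<in>T. monom (c A) (w A))"
    by (simp add: poly_eq_poly_eq_iff)
  then show ?thesis
    using assms(1) by (simp add: coeff_sum coeff_monom sum.inter_filter)
qed

definition trunc_geom_poly :: "nat \<Rightarrow> 'a::comm_semiring_1 poly" where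
  "trunc_geom_poly L = (\<Sum>k\<in>{1..<L}. monom 1 k)"

lemma coeff_trunc_geom_poly: "coeff (trunc_geom_poly L) v = (if 1 \<le> v \<and> v < L then 1 else 0)"
  unfolding trunc_geom_poly_def coeff_sum coeff_monom by (simp add: sum.delta)

lemma coeff_0_trunc_geom_poly_power: "p \<ge> 1 \<Longrightarrow> coeff (trunc_geom_poly L ^ p) 0 = 0"
  by (induction p) (auto simp: coeff_mult_0 coeff_trunc_geom_poly)

lemma coeff_trunc_geom_poly_power:
  assumes "p \<ge> 1" and "1 \<le> v" and "v < L + p - 1"
  shows "coeff (trunc_geom_poly L ^ p :: 'a::comm_semiring_1 poly) v = of_nat ((v - 1) choose (p - 1))"
  using assms
proof (induction p arbitrary: v)
  case 0
  then show ?case by simp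
next
  case (Suc q)
  show ?case
  proof (cases "q = 0")
    case True
    with Suc.prems show ?thesis by (simp add: coeff_trunc_geom_poly)
  next
    case False
    have factor_coeff: "coeff (trunc_geom_poly L) i * coeff (trunc_geom_poly L ^ q :: 'a poly) (v - i)
        = (if i \<in> {1..<v} then of_nat ((v - 1 - i) choose (q - 1)) else 0)" if "i \<le> v" for i
    proof (cases "i \<in> {1..<v}")
      case True
      show ?thesis
      proof (cases "i < L")
        case True
        have "coeff (trunc_geom_poly L ^ q :: 'a poly) (v - i) = of_nat ((v - i - 1) choose (q - 1))"
          using \<open>i \<in> {1..<v}\<close> True Suc.prems \<open>q \<noteq> 0\<close> by (intro Suc.IH) auto
        with \<open>i \<in> {1..<v}\<close> True show ?thesis
          by (simp add: coeff_trunc_geom_poly diff_commute)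
      next
        case False
        then have "v - 1 - i < q - 1"
          using Suc.prems \<open>i \<in> {1..<v}\<close> \<open>q \<noteq> 0\<close> by auto
        with False show ?thesis by (simp add: coeff_trunc_geom_poly binomial_eq_0)
      qed
    next
      case False
      with that have "i = 0 \<or> i = v" by auto
      with False \<open>q \<noteq> 0\<close> show ?thesis
        by (auto simp: coeff_trunc_geom_poly coeff_0_trunc_geom_poly_power)
    qed
    have "coeff (trunc_geom_poly L ^ Suc q :: 'a poly) v
        = (\<Sum>i\<le>v. coeff (trunc_geom_poly L) i * coeff (trunc_geom_poly L ^ q) (v - i))"
      by (simp add: coeff_mult)
    also have "\<dots> = (\<Sum>i\<in>{1..<v}. of_nat ((v - 1 - i) choose (q - 1)))"
      by (simp add: factor_coeff sum.If_cases) (rule sum.cong; auto)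
    also have "\<dots> = (\<Sum>j<v - 1. of_nat ((v - 1 - Suc j) choose (q - 1)))"
    proof -
      have "{1..<v} = Suc ` {..<v - 1}"
        using Suc.prems by (auto simp: image_Suc_lessThan)
      then show ?thesis by (simp add: sum.reindex)
    qed
    also have "\<dots> = (\<Sum>j<v - 1. of_nat (j choose (q - 1)))"
      by (rule sum.nat_diff_reindex)
    also have "\<dots> = of_nat ((v - 1) choose q)"
    proof -
      have "(\<Sum>j<u. j choose r) = u choose Suc r" for u r :: nat
        by (induction u) auto
      then show ?thesis
        using \<open>q \<noteq> 0\<close> by (simp flip: of_nat_sum)
    qed
    finally show ?thesis by simp
  qed
qed

theorem lemma7p3:
  fixes \<alpha> :: "'n::finite \<Rightarrow> nat" and m :: nat
  assumes "2 \<le> mi_abs \<alpha>" and "mi_abs \<alpha> \<le> m"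
  shows "(\<Sum>A\<in>Nset \<alpha> m. real (mi_fact \<alpha>) / (\<Prod>k\<in>{1..<m}. real (mi_fact (A k))))
         = real (fact (m - 1)) / (real (fact (m - mi_abs \<alpha>)) * real (fact (mi_abs \<alpha> - 1)))"
proof -
  define c where "c A = real (mi_fact \<alpha>) / (\<Prod>k\<in>{1..<m}. real (mi_fact (A k)))"
    for A :: "nat \<Rightarrow> 'n \<Rightarrow> nat"
  define w where "w A = (\<Sum>k\<in>{1..<m}. k * mi_abs (A k))" for A :: "nat \<Rightarrow> 'n \<Rightarrow> nat"
  have "(\<Sum>A\<in>mi_splits {1..<m} \<alpha>. c A * x ^ w A) = poly (trunc_geom_poly m ^ mi_abs \<alpha>) x"
    for x :: real
  proof -
    have "(\<Sum>A\<in>mi_splits {1..<m} \<alpha>. c A * x ^ w A)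
        = (\<Sum>A\<in>mi_splits {1..<m} \<alpha>. c A * (\<Prod>k\<in>{1..<m}. (x ^ k) ^ mi_abs (A k)))"
      unfolding w_def by (simp add: power_mult[symmetric] power_sum)
    also have "\<dots> = (\<Sum>k\<in>{1..<m}. x ^ k) ^ mi_abs \<alpha>"
      unfolding c_def by (rule mi_multinomial) simp
    also have "\<dots> = poly (trunc_geom_poly m ^ mi_abs \<alpha>) x"
      by (simp add: trunc_geom_poly_def poly_sum poly_monom)
    finally show ?thesis .
  qed
  then have "coeff (trunc_geom_poly m ^ mi_abs \<alpha>) m = (\<Sum>A\<in>{A\<in>mi_splits {1..<m} \<alpha>. w A = m}. c A)"
    by (intro coeff_poly_eq_sum_powers finite_mi_splits) simp_all
  also have "{A\<in>mi_splits {1..<m} \<alpha>. w A = m} = Nset \<alpha> m"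
    unfolding mi_splits_def Nset_def w_def by auto
  finally have "(\<Sum>A\<in>Nset \<alpha> m. c A) = real ((m - 1) choose (mi_abs \<alpha> - 1))"
    using assms by (simp add: coeff_trunc_geom_poly_power)
  with assms show ?thesis
    by (simp add: c_def binomial_fact mult_ac)
qed

end
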